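(* If $A\subseteq\mathbb{Z}^d$ is finite, then $\|\min_{\preceq}(A^* )\|\leq d\cdot\left(2+(1+2\cdot\|A\|)^d\cdot\|A\|\right)^d$.
   Context: $A^*$ is the submonoid of $(\mathbb{Z}^d,+)$ generated by $A$ (finite sums of elements of $A$). For $x\in\mathbb{Z}^d$, $\|x\|=\max_i|x(i)|$; for a finite set $Y$, $\|Y\|=\max_{y\in Y}\|y\|$ (with $\max\emptyset=0$). The partial order $\preceq$ on $\mathbb{Z}^d$: $x\preceq y$ iff $x$ and $y$ have the same componentwise sign vector and $|x(i)|\leq|y(i)|$ for all $i$; $\min_{\preceq}(Y)$ is the (finite) set of $\preceq$-minimal elements of $Y$. *)

theory Defs
  imports "HOL-Analysis.Analysis"
begin

text \<open>Vectors of Z^d are represented as int ^ 'd, with d = CARD('d).\<close>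

inductive_set monoid_closure :: "(int ^ 'd) set \<Rightarrow> (int ^ 'd) set" for A where
  zero: "0 \<in> monoid_closure A"
| add: "a \<in> A \<Longrightarrow> x \<in> monoid_closure A \<Longrightarrow> a + x \<in> monoid_closure A"

definition maxnorm :: "int ^ 'd \<Rightarrow> int" where
  "maxnorm x = Max {\<bar>x $ i\<bar> | i. True}"

definition set_maxnorm :: "(int ^ 'd) set \<Rightarrow> int" where
  "set_maxnorm Y = (if Y = {} then 0 else Max (maxnorm ` Y))"

definition sign_le :: "int ^ 'd \<Rightarrow> int ^ 'd \<Rightarrow> bool" where
  "sign_le x y \<longleftrightarrow> (\<forall>i. sgn (x $ i) = sgn (y $ i) \<and> \<bar>x $ i\<bar> \<le> \<bar>y $ i\<bar>)"

definition min_sign :: "(int ^ 'd) set \<Rightarrow> (int ^ 'd) set" where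
  "min_sign Y = {y \<in> Y. \<forall>z \<in> Y. sign_le z y \<longrightarrow> z = y}"

end

theory Submission
  imports Defs
begin

(* Call y in A* decomposable if y = z + w with z, w nonzero elements of A* that are conformal
   to y, i.e. every coordinate of z and of w lies between 0 and the corresponding coordinate
   of y.  Write an indecomposable y as a sum of elements of A without zero-sum subsums and
   append |y(i)| copies of -sgn(y(i)) e_i for every i.  The result is a zero-sum sequence of
   vectors of max norm at most ||A|| without proper zero-sum subsequences.  By the Steinitz
   lemma it can be ordered so that all partial sums lie in the box of radius d ||A||, and they
   are pairwise distinct, so |y(i)| <= (2 d ||A|| + 1)^d.  A minimal element y is covered,
   coordinate by coordinate, by at most d indecomposable pieces of a conformal decomposition
   of y; their sum is below y in the sign order and therefore equals y.  Bernoulli's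
   inequality turns the bound d (2 d ||A|| + 1)^d into the stated one. *)

section \<open>The Steinitz lemma for the maximum norm\<close>

lemma exists_nontrivial_linear_relation:
  fixes W :: "'i \<Rightarrow> 'v::euclidean_space"
  assumes "finite F" "DIM('v) < card F"
  shows "\<exists>\<delta>. (\<exists>j\<in>F. \<delta> j \<noteq> 0) \<and> (\<Sum>j\<in>F. \<delta> j *\<^sub>R W j) = 0"
proof (cases "inj_on W F")
  case False
  then obtain j j' where jj: "j \<in> F" "j' \<in> F" "j \<noteq> j'" "W j = W j'"
    unfolding inj_on_def by blast
  define \<delta> where "\<delta> x = (if x = j then 1 else if x = j' then -1 else 0 :: real)" for x
  have "(\<Sum>x\<in>F. \<delta> x *\<^sub>R W x) = (\<Sum>x\<in>{j,j'}. \<delta> x *\<^sub>R W x)"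
    by (rule sum.mono_neutral_right) (use assms jj in \<open>auto simp: \<delta>_def\<close>)
  also have "\<dots> = 0" using jj by (simp add: \<delta>_def)
  finally show ?thesis using jj by (auto simp: \<delta>_def intro!: exI[of _ \<delta>])
next
  case True
  then have "dependent (W ` F)"
    using assms by (intro dependent_biggerset) (simp add: card_image)
  then obtain c where c: "\<exists>v\<in>W ` F. c v \<noteq> 0" "(\<Sum>v\<in>W ` F. c v *\<^sub>R v) = 0"
    using assms(1) by (auto simp: dependent_finite)
  have "(\<Sum>v\<in>W ` F. c v *\<^sub>R v) = (\<Sum>j\<in>F. c (W j) *\<^sub>R W j)"
    by (rule sum.reindex_cong[OF True refl]) simp
  then have "(\<Sum>j\<in>F. c (W j) *\<^sub>R W j) = 0"
    using c(2) by argo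
  with c(1) show ?thesis by (auto intro!: exI[of _ "\<lambda>j. c (W j)"])
qed

definition fractional_indices :: "('i \<Rightarrow> real) \<Rightarrow> 'i set \<Rightarrow> 'i set" where
  "fractional_indices \<mu> S = {j\<in>S. 0 < \<mu> j \<and> \<mu> j < 1}"

lemma finite_fractional_indices: "finite S \<Longrightarrow> finite (fractional_indices \<mu> S)"
  by (simp add: fractional_indices_def)

definition exit_time :: "real \<Rightarrow> real \<Rightarrow> real" where
  "exit_time m \<delta> = (if 0 < \<delta> then 1 - m else m) / \<bar>\<delta>\<bar>"

lemma exit_time_pos: "0 < m \<Longrightarrow> m < 1 \<Longrightarrow> \<delta> \<noteq> 0 \<Longrightarrow> 0 < exit_time m \<delta>"
  by (simp add: exit_time_def)

lemma add_mult_in_unit_interval: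
  assumes "0 < m" "m < 1" "0 \<le> t" "t \<le> exit_time m \<delta>"
  shows "m + t * \<delta> \<in> {0..1}"
proof -
  consider "\<delta> = 0" | "0 < \<delta>" | "\<delta> < 0" by linarith
  then show ?thesis
  proof cases
    case 2
    then have "t * \<delta> \<le> 1 - m"
      using mult_right_mono[OF assms(4), of \<delta>] by (simp add: exit_time_def)
    then show ?thesis using assms(1,3) 2 by simp
  next
    case 3
    then have "- (t * \<delta>) \<le> m"
      using mult_right_mono[OF assms(4), of "- \<delta>"] by (simp add: exit_time_def)
    then show ?thesis using assms(2,3) 3 mult_nonneg_nonpos[of t \<delta>] by simp
  qed (use assms in auto)
qed

lemma add_exit_time_mult: "\<delta> \<noteq> 0 \<Longrightarrow> m + exit_time m \<delta> * \<delta> \<in> {0, 1}"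
  by (auto simp: exit_time_def abs_if)

lemma fractional_indices_shrink:
  fixes W :: "'i \<Rightarrow> 'v::euclidean_space"
  assumes S: "finite S" and \<mu>: "\<mu> ` S \<subseteq> {0..1}"
    and big: "DIM('v) < card (fractional_indices \<mu> S)"
  shows "\<exists>\<mu>'. \<mu>' ` S \<subseteq> {0..1} \<and> (\<Sum>j\<in>S. \<mu>' j *\<^sub>R W j) = (\<Sum>j\<in>S. \<mu> j *\<^sub>R W j)
           \<and> fractional_indices \<mu>' S \<subset> fractional_indices \<mu> S"
proof -
  define F where "F = fractional_indices \<mu> S"
  have F: "finite F" "F \<subseteq> S" "\<And>j. j \<in> F \<Longrightarrow> 0 < \<mu> j \<and> \<mu> j < 1"
    using S by (auto simp: F_def fractional_indices_def)
  obtain \<delta> where \<delta>: "\<exists>j\<in>F. \<delta> j \<noteq> 0" "(\<Sum>j\<in>F. \<delta> j *\<^sub>R W j) = 0"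
    using exists_nontrivial_linear_relation[OF F(1) big[folded F_def]] by blast
  \<comment> \<open>move along \<open>\<delta>\<close> until the first fractional coefficient reaches 0 or 1\<close>
  define G where "G = {j\<in>F. \<delta> j \<noteq> 0}"
  define t where "t = Min ((\<lambda>j. exit_time (\<mu> j) (\<delta> j)) ` G)"
  have G: "finite G" "G \<noteq> {}" using F(1) \<delta>(1) by (auto simp: G_def)
  then obtain j0 where j0: "j0 \<in> G" "t = exit_time (\<mu> j0) (\<delta> j0)"
    unfolding t_def by (metis (no_types, lifting) Min_in finite_imageI image_iff image_is_empty)
  have t_le: "t \<le> exit_time (\<mu> j) (\<delta> j)" if "j \<in> G" for j
    using G that by (simp add: t_def)
  have "0 < t"
    using j0 F(3) by (auto simp: G_def intro: exit_time_pos)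
  define \<mu>' where "\<mu>' j = (if j \<in> F then \<mu> j + t * \<delta> j else \<mu> j)" for j
  have "\<mu>' j \<in> {0..1}" if "j \<in> S" for j
    using \<mu> that F(3) t_le \<open>0 < t\<close> add_mult_in_unit_interval
    by (cases "j \<in> G") (auto simp: \<mu>'_def G_def)
  moreover have "(\<Sum>j\<in>S. \<mu>' j *\<^sub>R W j) = (\<Sum>j\<in>S. \<mu> j *\<^sub>R W j)"
  proof -
    have "(\<Sum>j\<in>S. \<mu>' j *\<^sub>R W j)
        = (\<Sum>j\<in>S. \<mu> j *\<^sub>R W j) + (\<Sum>j\<in>S. (if j \<in> F then t * \<delta> j else 0) *\<^sub>R W j)"
      unfolding sum.distrib[symmetric] by (rule sum.cong) (auto simp: \<mu>'_def scaleR_add_left)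
    also have "(\<Sum>j\<in>S. (if j \<in> F then t * \<delta> j else 0) *\<^sub>R W j) = (\<Sum>j\<in>F. (t * \<delta> j) *\<^sub>R W j)"
      by (rule sum.mono_neutral_cong_right) (use S F(2) in auto)
    also have "(\<Sum>j\<in>F. (t * \<delta> j) *\<^sub>R W j) = 0"
      using \<delta>(2) by (simp flip: scaleR_scaleR scaleR_sum_right)
    finally show ?thesis by simp
  qed
  moreover have "fractional_indices \<mu>' S \<subset> F"
  proof -
    have "\<mu>' j0 \<in> {0, 1}"
      using j0 add_exit_time_mult by (auto simp: \<mu>'_def G_def)
    then have "j0 \<notin> fractional_indices \<mu>' S"
      by (auto simp: fractional_indices_def)
    moreover have "fractional_indices \<mu>' S \<subseteq> F"
      by (auto simp: fractional_indices_def F_def \<mu>'_def)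
    ultimately show ?thesis using j0(1) by (auto simp: G_def)
  qed
  ultimately show ?thesis unfolding F_def by blast
qed

lemma exists_coefficients_few_fractional:
  fixes W :: "'i \<Rightarrow> 'v::euclidean_space"
  assumes "finite S" "\<mu> ` S \<subseteq> {0..1}"
  shows "\<exists>\<mu>'. \<mu>' ` S \<subseteq> {0..1} \<and> (\<Sum>j\<in>S. \<mu>' j *\<^sub>R W j) = (\<Sum>j\<in>S. \<mu> j *\<^sub>R W j)
           \<and> card (fractional_indices \<mu>' S) \<le> DIM('v)"
  using assms(2)
proof (induction "card (fractional_indices \<mu> S)" arbitrary: \<mu> rule: less_induct)
  case less
  show ?case
  proof (cases "card (fractional_indices \<mu> S) \<le> DIM('v)")
    case False
    then obtain \<mu>' where \<mu>': "\<mu>' ` S \<subseteq> {0..1}"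
        "(\<Sum>j\<in>S. \<mu>' j *\<^sub>R W j) = (\<Sum>j\<in>S. \<mu> j *\<^sub>R W j)"
        "fractional_indices \<mu>' S \<subset> fractional_indices \<mu> S"
      using fractional_indices_shrink[OF assms(1) less.prems, where W = W] by (auto simp: not_le)
    have "card (fractional_indices \<mu>' S) < card (fractional_indices \<mu> S)"
      using \<mu>'(3) by (intro psubset_card_mono finite_fractional_indices assms(1))
    then show ?thesis using less.hyps \<mu>'(1,2) by metis
  qed (use less.prems in blast)
qed

(* The weights of Grinberg and Sevastyanov's proof of the Steinitz lemma: admissibility
   bounds the sum by d K and survives the removal of a suitable vector. *)
definition steinitz_admissible :: "('i \<Rightarrow> real^'d) \<Rightarrow> 'i set \<Rightarrow> bool" where
  "steinitz_admissible u S \<longleftrightarrow> card S \<le> CARD('d) \<or>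
     (\<exists>c. c ` S \<subseteq> {0..1} \<and> (\<Sum>j\<in>S. c j *\<^sub>R u j) = 0 \<and> (\<Sum>j\<in>S. c j) = real (card S) - real CARD('d))"

lemma steinitz_admissible_sum_bound:
  fixes u :: "'i \<Rightarrow> real^'d" and K :: real
  assumes S: "finite S" "steinitz_admissible u S"
    and K: "\<And>j i. j \<in> S \<Longrightarrow> \<bar>u j $ i\<bar> \<le> K" "0 \<le> K"
  shows "\<bar>(\<Sum>j\<in>S. u j) $ i\<bar> \<le> real CARD('d) * K"
proof (cases "card S \<le> CARD('d)")
  case True
  have "\<bar>(\<Sum>j\<in>S. u j) $ i\<bar> \<le> (\<Sum>j\<in>S. \<bar>u j $ i\<bar>)"
    by (simp add: sum_abs)
  also have "\<dots> \<le> card S * K"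
    using K(1) sum_bounded_above[of S "\<lambda>j. \<bar>u j $ i\<bar>" K] by simp
  also have "\<dots> \<le> real CARD('d) * K"
    using True K(2) by (simp add: mult_right_mono)
  finally show ?thesis .
next
  case False
  then obtain c where c: "c ` S \<subseteq> {0..1}" "(\<Sum>j\<in>S. c j *\<^sub>R u j) = 0"
      "(\<Sum>j\<in>S. c j) = real (card S) - real CARD('d)"
    using S(2) by (auto simp: steinitz_admissible_def)
  \<comment> \<open>subtracting the vanishing combination leaves total weight \<open>\<Sum>j\<in>S. 1 - c j = CARD('d)\<close>\<close>
  have "(\<Sum>j\<in>S. c j * u j $ i) = 0"
    using arg_cong[OF c(2), of "\<lambda>v. v $ i"] by simp
  then have "(\<Sum>j\<in>S. u j) $ i = (\<Sum>j\<in>S. (1 - c j) * u j $ i)"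
    by (simp add: left_diff_distrib sum_subtractf)
  also have "\<bar>\<dots>\<bar> \<le> (\<Sum>j\<in>S. (1 - c j) * K)"
  proof (intro order_trans[OF sum_abs] sum_mono)
    fix j assume "j \<in> S"
    then have "0 \<le> 1 - c j" using c(1) by auto
    then show "\<bar>(1 - c j) * u j $ i\<bar> \<le> (1 - c j) * K"
      using K(1)[OF \<open>j \<in> S\<close>] by (simp add: abs_mult mult_left_mono)
  qed
  also have "\<dots> = real CARD('d) * K"
    using c(3) by (simp add: sum_distrib_right[symmetric] sum_subtractf)
  finally show ?thesis .
qed

lemma steinitz_admissible_if_sum_zero:
  fixes u :: "'i \<Rightarrow> real^'d"
  assumes "finite T" "(\<Sum>j\<in>T. u j) = 0"
  shows "steinitz_admissible u T"
proof (cases "card T \<le> CARD('d)")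
  case False
  define c where "c = (real (card T) - real CARD('d)) / real (card T)"
  have "c \<in> {0..1}" using False by (simp add: c_def field_simps)
  moreover have "(\<Sum>j\<in>T. c *\<^sub>R u j) = 0"
    using assms(2) by (simp flip: scaleR_sum_right)
  moreover have "(\<Sum>j\<in>T. c) = real (card T) - real CARD('d)"
    using False by (simp add: c_def)
  ultimately show ?thesis
    unfolding steinitz_admissible_def by (intro disjI2 exI[of _ "\<lambda>_. c"]) auto
qed (simp add: steinitz_admissible_def)

lemma exists_zero_coefficient:
  assumes S: "finite S" "\<mu> ` S \<subseteq> {0..1}" and few: "card (fractional_indices \<mu> S) \<le> m + 1"
    and sum: "(\<Sum>j\<in>S. \<mu> j) = real (card S) - real m - 1"
  shows "\<exists>j\<in>S. \<mu> j = 0"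
proof (rule ccontr)
  assume "\<not> ?thesis"
  then have pos: "0 < \<mu> j" if "j \<in> S" for j
    using S(2) that by force
  define F where "F = fractional_indices \<mu> S"
  have F: "finite F" "F \<subseteq> S" using S(1) by (auto simp: F_def fractional_indices_def)
  have ones: "\<mu> j = 1" if "j \<in> S - F" for j
    using S(2) pos that by (force simp: F_def fractional_indices_def)
  have "(\<Sum>j\<in>S. \<mu> j) = (\<Sum>j\<in>S - F. \<mu> j) + (\<Sum>j\<in>F. \<mu> j)"
    using sum.subset_diff[OF F(2) S(1)] .
  also have "(\<Sum>j\<in>S - F. \<mu> j) = real (card S) - real (card F)"
    using ones S(1) F by (simp add: card_Diff_subset of_nat_diff card_mono)
  finally have "(\<Sum>j\<in>F. \<mu> j) = real (card F) - real m - 1"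
    using sum by simp
  moreover have "0 \<le> (\<Sum>j\<in>F. \<mu> j)"
    using pos F(2) by (intro sum_nonneg) (auto intro: less_imp_le)
  moreover have "0 < (\<Sum>j\<in>F. \<mu> j)" if "F \<noteq> {}"
    using pos F that by (intro sum_pos) auto
  ultimately show False
    using few[folded F_def] by (cases "F = {}") auto
qed

lemma sum_scaleR_pair_one:
  "(\<Sum>j\<in>S. a j *\<^sub>R (u j, 1::real)) = (\<Sum>j\<in>S. a j *\<^sub>R u j, \<Sum>j\<in>S. a j)"
  by (simp add: prod_eq_iff fst_sum snd_sum)

lemma steinitz_admissible_remove:
  fixes u :: "'i \<Rightarrow> real^'d"
  assumes S: "finite S" "steinitz_admissible u S" "S \<noteq> {}"
  shows "\<exists>j\<in>S. steinitz_admissible u (S - {j})"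
proof (cases "card S \<le> CARD('d)")
  case True
  then show ?thesis
    using S(3) card_Diff1_le[of S] by (auto simp: steinitz_admissible_def intro: le_trans)
next
  case False
  define k where "k = real (card S) - real CARD('d)"
  have k: "1 \<le> k" using False by (simp add: k_def)
  obtain c where c: "c ` S \<subseteq> {0..1}" "(\<Sum>j\<in>S. c j *\<^sub>R u j) = 0" "(\<Sum>j\<in>S. c j) = k"
    using S(2) False by (auto simp: steinitz_admissible_def k_def)
  \<comment> \<open>rescale the weights to total \<open>k - 1\<close>, then make all but \<open>CARD('d) + 1\<close> of them 0 or 1\<close>
  define q where "q = (k - 1) / k"
  have q: "0 \<le> q" "q \<le> 1" "q * k = k - 1"
    using k by (simp_all add: q_def)
  define c' where "c' j = q * c j" for j
  have c': "c' ` S \<subseteq> {0..1}"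
    using c(1) q by (force simp: c'_def image_subset_iff intro: mult_le_one)
  obtain \<mu> where \<mu>: "\<mu> ` S \<subseteq> {0..1}"
      "(\<Sum>j\<in>S. \<mu> j *\<^sub>R (u j, 1::real)) = (\<Sum>j\<in>S. c' j *\<^sub>R (u j, 1))"
      "card (fractional_indices \<mu> S) \<le> DIM((real^'d) \<times> real)"
    using exists_coefficients_few_fractional[OF S(1) c', where W = "\<lambda>j. (u j, 1)"] by blast
  have "(\<Sum>j\<in>S. c' j *\<^sub>R (u j, 1::real)) = (q *\<^sub>R (\<Sum>j\<in>S. c j *\<^sub>R u j), q * (\<Sum>j\<in>S. c j))"
    unfolding sum_scaleR_pair_one by (simp add: c'_def scaleR_sum_right sum_distrib_left)
  also have "\<dots> = (0, k - 1)"
    using c(2,3) q(3) by simp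
  finally have "(\<Sum>j\<in>S. \<mu> j *\<^sub>R u j, \<Sum>j\<in>S. \<mu> j) = (0, k - 1)"
    using \<mu>(2) by (simp only: sum_scaleR_pair_one)
  then have \<mu>_sums: "(\<Sum>j\<in>S. \<mu> j *\<^sub>R u j) = 0" "(\<Sum>j\<in>S. \<mu> j) = k - 1"
    by simp_all
  obtain j where j: "j \<in> S" "\<mu> j = 0"
    using exists_zero_coefficient[OF S(1) \<mu>(1), of "CARD('d)"] \<mu>(3) \<mu>_sums(2) by (auto simp: k_def)
  have "(\<Sum>i\<in>S - {j}. \<mu> i *\<^sub>R u i) = 0" "(\<Sum>i\<in>S - {j}. \<mu> i) = k - 1"
    using \<mu>_sums j S(1) by (simp_all add: sum_diff1)
  moreover have "real (card (S - {j})) - real CARD('d) = k - 1"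
    using j S(1) False by (simp add: k_def of_nat_diff)
  ultimately show ?thesis
    using \<mu>(1) j(1) unfolding steinitz_admissible_def by (intro bexI[of _ j] disjI2 exI[of _ \<mu>]) auto
qed

lemma chain_of_removals:
  assumes "finite S" "P S"
    and remove: "\<And>S. finite S \<Longrightarrow> P S \<Longrightarrow> S \<noteq> {} \<Longrightarrow> \<exists>j\<in>S. P (S - {j})"
  shows "\<exists>f. mono f \<and> (\<forall>k. f k \<subseteq> S) \<and> (\<forall>k\<le>card S. card (f k) = k \<and> P (f k))"
  using assms(1,2)
proof (induction "card S" arbitrary: S)
  case 0
  then show ?case by (intro exI[of _ "\<lambda>_. {}"]) (auto simp: mono_def)
next
  case (Suc n)
  then obtain j where j: "j \<in> S" "P (S - {j})"
    using remove by force
  then obtain f where f: "mono f" "\<forall>k. f k \<subseteq> S - {j}" "\<forall>k\<le>n. card (f k) = k \<and> P (f k)"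
    using Suc by (metis card_Diff_singleton diff_Suc_1 finite_Diff)
  define g where "g k = (if k \<le> n then f k else S)" for k
  have "mono g"
    using f(1,2) by (auto simp: mono_def g_def dest: monoD)
  moreover have "\<forall>k. g k \<subseteq> S"
    using f(2) by (auto simp: g_def)
  moreover have "\<forall>k\<le>card S. card (g k) = k \<and> P (g k)"
    using f(3) Suc by (auto simp: g_def le_Suc_eq)
  ultimately show ?case by blast
qed

lemma steinitz_chain:
  fixes u :: "'i \<Rightarrow> real^'d" and K :: real
  assumes T: "finite T" "(\<Sum>j\<in>T. u j) = 0"
    and K: "\<And>j i. j \<in> T \<Longrightarrow> \<bar>u j $ i\<bar> \<le> K" "0 \<le> K"
  shows "\<exists>f. mono f \<and> (\<forall>k. f k \<subseteq> T) \<and>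
    (\<forall>k\<le>card T. card (f k) = k \<and> (\<forall>i. \<bar>(\<Sum>j\<in>f k. u j) $ i\<bar> \<le> real CARD('d) * K))"
proof -
  obtain f where f: "mono f" "\<forall>k. f k \<subseteq> T" "\<forall>k\<le>card T. card (f k) = k \<and> steinitz_admissible u (f k)"
    using chain_of_removals[OF T(1) steinitz_admissible_if_sum_zero[OF T] steinitz_admissible_remove]
    by blast
  have "\<bar>(\<Sum>j\<in>f k. u j) $ i\<bar> \<le> real CARD('d) * K" if "k \<le> card T" for k i
    using f that T(1) by (intro steinitz_admissible_sum_bound K(2)) (auto intro: finite_subset K(1))
  with f show ?thesis by blast
qed

section \<open>Conformal decompositions\<close>

definition conformal_le :: "int^'d \<Rightarrow> int^'d \<Rightarrow> bool" where
  "conformal_le z y \<longleftrightarrow> (\<forall>i. 0 \<le> z $ i \<and> z $ i \<le> y $ i \<or> y $ i \<le> z $ i \<and> z $ i \<le> 0)"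

lemma conformal_le_refl: "conformal_le y y"
  by (auto simp: conformal_le_def)

lemma conformal_le_zero: "conformal_le 0 y"
  by (auto simp: conformal_le_def)

lemma conformal_le_trans: "conformal_le x z \<Longrightarrow> conformal_le z y \<Longrightarrow> conformal_le x y"
  unfolding conformal_le_def by (smt (verit))

lemma abs_add_conformal_le:
  "conformal_le z y \<Longrightarrow> conformal_le w y \<Longrightarrow> \<bar>(z + w) $ i\<bar> = \<bar>z $ i\<bar> + \<bar>w $ i\<bar>"
  unfolding conformal_le_def by (smt (verit) vector_add_component)

lemma conformal_le_add:
  assumes "z + w = y" "conformal_le z y" "conformal_le w y" "conformal_le z' z" "conformal_le w' w"
  shows "conformal_le (z' + w') y"
  unfolding conformal_le_def
proof
  fix i
  have "y $ i = z $ i + w $ i" using assms(1) by auto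
  then show "0 \<le> (z' + w') $ i \<and> (z' + w') $ i \<le> y $ i \<or> y $ i \<le> (z' + w') $ i \<and> (z' + w') $ i \<le> 0"
    using assms(2-5) unfolding conformal_le_def vector_add_component
    by (smt (verit))
qed

lemma sum_abs_less_if_conformal_split:
  fixes z w y :: "int^'d"
  assumes "z + w = y" "conformal_le z y" "conformal_le w y" "w \<noteq> 0"
  shows "nat (\<Sum>i\<in>UNIV. \<bar>z $ i\<bar>) < nat (\<Sum>i\<in>UNIV. \<bar>y $ i\<bar>)"
proof -
  obtain k where "w $ k \<noteq> 0"
    using assms(4) by (auto simp: vec_eq_iff)
  have "(\<Sum>i\<in>UNIV. \<bar>y $ i\<bar>) = (\<Sum>i\<in>UNIV. \<bar>z $ i\<bar>) + (\<Sum>i\<in>UNIV. \<bar>w $ i\<bar>)"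
    using abs_add_conformal_le[OF assms(2,3)] assms(1) by (simp add: sum.distrib)
  moreover have "\<bar>w $ k\<bar> \<le> (\<Sum>i\<in>UNIV. \<bar>w $ i\<bar>)"
    by (rule member_le_sum) auto
  moreover have "0 \<le> (\<Sum>i\<in>UNIV. \<bar>z $ i\<bar>)"
    by (simp add: sum_nonneg)
  ultimately show ?thesis
    using \<open>w $ k \<noteq> 0\<close> by linarith
qed

lemma sign_le_iff_conformal_le:
  "sign_le z y \<longleftrightarrow> conformal_le z y \<and> (\<forall>i. y $ i \<noteq> 0 \<longrightarrow> z $ i \<noteq> 0)"
  unfolding sign_le_def conformal_le_def sgn_if by (smt (verit))

definition decomposable :: "(int^'d) set \<Rightarrow> int^'d \<Rightarrow> bool" where
  "decomposable A y \<longleftrightarrow> (\<exists>z w. z \<in> monoid_closure A \<and> w \<in> monoid_closure A \<and> z \<noteq> 0 \<and> w \<noteq> 0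
      \<and> z + w = y \<and> conformal_le z y \<and> conformal_le w y)"

lemma monoid_closure_add:
  "x \<in> monoid_closure A \<Longrightarrow> y \<in> monoid_closure A \<Longrightarrow> x + y \<in> monoid_closure A"
  by (induction x rule: monoid_closure.induct) (auto simp: add.assoc intro: monoid_closure.add)

lemma monoid_closure_sum:
  "finite J \<Longrightarrow> x ` J \<subseteq> A \<Longrightarrow> (\<Sum>j\<in>J. x j) \<in> monoid_closure A"
  by (induction J rule: finite_induct) (auto intro: monoid_closure.intros)

lemma monoid_closure_trivial:
  assumes "A \<subseteq> {0}" "y \<in> monoid_closure A"
  shows "y = 0"
  using assms(2) by induction (use assms(1) in auto)

lemma monoid_closure_obtain_sum:
  assumes "y \<in> monoid_closure A"
  obtains J :: "nat set" and x where "finite J" "x ` J \<subseteq> A" "(\<Sum>j\<in>J. x j) = y"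
proof -
  from assms have "\<exists>(J :: nat set) x. finite J \<and> x ` J \<subseteq> A \<and> (\<Sum>j\<in>J. x j) = y"
  proof (induction y rule: monoid_closure.induct)
    case zero
    show ?case by (intro exI[of _ "{}"]) simp
  next
    case (add a y)
    then obtain J :: "nat set" and x where J: "finite J" "x ` J \<subseteq> A" "(\<Sum>j\<in>J. x j) = y"
      by blast
    obtain n where "n \<notin> J"
      using J(1) infinite_UNIV_nat ex_new_if_finite by blast
    then have "(\<Sum>j\<in>J. (x(n := a)) j) = y"
      using J(3) by (auto intro: sum.cong)
    then have "(\<Sum>j\<in>insert n J. (x(n := a)) j) = a + y"
      using J(1) \<open>n \<notin> J\<close> by simp
    moreover have "(x(n := a)) ` insert n J \<subseteq> A"
      using J(2) add.hyps(1) \<open>n \<notin> J\<close> by auto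
    ultimately show ?case
      using J(1) by (intro exI[of _ "insert n J"] exI[of _ "x(n := a)"]) simp
  qed
  with that show ?thesis by blast
qed

definition zero_sum_free :: "('a \<Rightarrow> 'b::comm_monoid_add) \<Rightarrow> 'a set \<Rightarrow> bool" where
  "zero_sum_free x J \<longleftrightarrow> (\<forall>D\<subseteq>J. D \<noteq> {} \<longrightarrow> (\<Sum>j\<in>D. x j) \<noteq> 0)"

lemma zero_sum_free_subset:
  fixes x :: "'a \<Rightarrow> 'b::ab_group_add"
  assumes "finite J"
  shows "\<exists>J'\<subseteq>J. (\<Sum>j\<in>J'. x j) = (\<Sum>j\<in>J. x j) \<and> zero_sum_free x J'"
  using assms
proof (induction J rule: finite_psubset_induct)
  case (psubset J)
  show ?case
  proof (cases "zero_sum_free x J")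
    case False
    then obtain D where D: "D \<subseteq> J" "D \<noteq> {}" "(\<Sum>j\<in>D. x j) = 0"
      by (auto simp: zero_sum_free_def)
    then have "J - D \<subset> J" "(\<Sum>j\<in>J - D. x j) = (\<Sum>j\<in>J. x j)"
      using psubset.hyps by (auto simp: sum_diff finite_subset)
    then show ?thesis
      using psubset.IH[of "J - D"] by (metis Diff_subset order_trans)
  qed blast
qed

lemma monoid_closure_obtain_zero_sum_free:
  assumes "y \<in> monoid_closure A"
  obtains J :: "nat set" and x
  where "finite J" "x ` J \<subseteq> A" "(\<Sum>j\<in>J. x j) = y" "zero_sum_free x J"
proof -
  obtain J0 :: "nat set" and x where J0: "finite J0" "x ` J0 \<subseteq> A" "(\<Sum>j\<in>J0. x j) = y"
    using monoid_closure_obtain_sum[OF assms] .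
  then obtain J where "J \<subseteq> J0" "(\<Sum>j\<in>J. x j) = y" "zero_sum_free x J"
    using zero_sum_free_subset[OF J0(1), of x] by auto
  with J0 that show ?thesis
    by (meson finite_subset image_mono order_trans)
qed

section \<open>Bounding indecomposable elements\<close>

(* |y $ i| copies of -sgn (y $ i) e_i, indexed by (i, n) with n < |y $ i|: appended to a sum
   representation of y they produce a zero sum. *)
definition unit_steps :: "int^'d \<Rightarrow> ('d \<times> nat) set" where
  "unit_steps y = (SIGMA i:UNIV. {..<nat \<bar>y $ i\<bar>})"

definition unit_step :: "int^'d \<Rightarrow> 'd \<times> nat \<Rightarrow> int^'d" where
  "unit_step y p = axis (fst p) (- sgn (y $ fst p))"

lemma finite_unit_steps: "finite (unit_steps y)"
  by (simp add: unit_steps_def)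

lemma card_unit_steps_fibre: "card {p \<in> unit_steps y. fst p = i} = nat \<bar>y $ i\<bar>"
proof -
  have "{p \<in> unit_steps y. fst p = i} = {i} \<times> {..<nat \<bar>y $ i\<bar>}"
    by (auto simp: unit_steps_def)
  then show ?thesis by (simp add: card_cartesian_product)
qed

lemma sum_unit_step_nth:
  assumes "finite D"
  shows "(\<Sum>p\<in>D. unit_step y p) $ i = - sgn (y $ i) * int (card {p \<in> D. fst p = i})"
proof -
  have "(\<Sum>p\<in>D. unit_step y p) $ i = (\<Sum>p\<in>D. if fst p = i then - sgn (y $ i) else 0)"
    by (auto simp: unit_step_def axis_def intro: sum.cong)
  also have "\<dots> = (\<Sum>p\<in>{p \<in> D. fst p = i}. - sgn (y $ i))"
    by (simp only: sum.inter_filter[OF assms])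
  finally show ?thesis by simp
qed

lemma sum_unit_steps: "(\<Sum>p\<in>unit_steps y. unit_step y p) = - y"
  by (simp add: vec_eq_iff sum_unit_step_nth finite_unit_steps card_unit_steps_fibre sgn_mult_abs
      del: sum_component)

lemma card_unit_steps_fibre_le:
  assumes "D \<subseteq> unit_steps y"
  shows "card {p \<in> D. fst p = i} \<le> nat \<bar>y $ i\<bar>"
proof -
  have "card {p \<in> D. fst p = i} \<le> card {p \<in> unit_steps y. fst p = i}"
    using assms by (intro card_mono) (auto intro: finite_subset[OF _ finite_unit_steps])
  then show ?thesis by (simp add: card_unit_steps_fibre)
qed

lemma conformal_le_neg_sum_unit_step:
  assumes "D \<subseteq> unit_steps y"
  shows "conformal_le (- (\<Sum>p\<in>D. unit_step y p)) y"
  unfolding conformal_le_def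
proof
  fix i
  have "int (card {p \<in> D. fst p = i}) \<le> \<bar>y $ i\<bar>"
    using card_unit_steps_fibre_le[OF assms, of i] by linarith
  then show "0 \<le> (- (\<Sum>p\<in>D. unit_step y p)) $ i \<and> (- (\<Sum>p\<in>D. unit_step y p)) $ i \<le> y $ i
      \<or> y $ i \<le> (- (\<Sum>p\<in>D. unit_step y p)) $ i \<and> (- (\<Sum>p\<in>D. unit_step y p)) $ i \<le> 0"
    using finite_subset[OF assms finite_unit_steps]
    by (simp add: sum_unit_step_nth del: sum_component) (auto simp: sgn_if)
qed

lemma sum_unit_step_eq_0_iff:
  assumes "D \<subseteq> unit_steps y"
  shows "(\<Sum>p\<in>D. unit_step y p) = 0 \<longleftrightarrow> D = {}"
proof
  assume sum0: "(\<Sum>p\<in>D. unit_step y p) = 0"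
  show "D = {}"
  proof (rule ccontr)
    assume "D \<noteq> {}"
    then obtain i n where "(i, n) \<in> D" by auto
    then have "y $ i \<noteq> 0" "{p \<in> D. fst p = i} \<noteq> {}"
      using assms by (auto simp: unit_steps_def)
    moreover have "finite D" using finite_subset[OF assms finite_unit_steps] .
    ultimately have "(\<Sum>p\<in>D. unit_step y p) $ i \<noteq> 0"
      by (simp add: sum_unit_step_nth sgn_if del: sum_component)
    then show False using sum0 by simp
  qed
qed simp

lemma abs_le_card_unit_steps: "\<bar>y $ i\<bar> \<le> int (card (unit_steps y))"
proof -
  have "card {p \<in> unit_steps y. fst p = i} \<le> card (unit_steps y)"
    by (intro card_mono finite_unit_steps) auto
  then show ?thesis by (simp add: card_unit_steps_fibre)
qed

lemma sum_Plus_unit_steps_eq_0: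
  assumes "finite J" "(\<Sum>j\<in>J. x j) = y"
  shows "(\<Sum>q\<in>J <+> unit_steps y. case_sum x (unit_step y) q) = 0"
  using assms sum_unit_steps[of y] by (simp add: sum.Plus[OF assms(1) finite_unit_steps] comp_def)

lemma conformal_part_of_zero_sum:
  fixes x :: "'a \<Rightarrow> int^'d"
  assumes J: "finite J" "(\<Sum>j\<in>J. x j) = y" "zero_sum_free x J"
    and D: "D \<subseteq> J <+> unit_steps y" "D \<noteq> {}" "(\<Sum>q\<in>D. case_sum x (unit_step y) q) = 0"
  shows "(\<Sum>j | Inl j \<in> D. x j) \<noteq> 0 \<and> conformal_le (\<Sum>j | Inl j \<in> D. x j) y"
proof -
  define D1 where "D1 = {j. Inl j \<in> D}"
  define D2 where "D2 = {p. Inr p \<in> D}"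
  have D12: "D1 \<subseteq> J" "D2 \<subseteq> unit_steps y" "D = D1 <+> D2"
    using D(1) by (auto simp: D1_def D2_def elim: PlusE)
  have fin: "finite D1" "finite D2"
    using D12 J(1) finite_unit_steps finite_subset by blast+
  have "(\<Sum>q\<in>D. case_sum x (unit_step y) q) = (\<Sum>j\<in>D1. x j) + (\<Sum>p\<in>D2. unit_step y p)"
    unfolding D12(3) by (simp add: sum.Plus[OF fin] comp_def)
  then have part: "(\<Sum>j\<in>D1. x j) = - (\<Sum>p\<in>D2. unit_step y p)"
    using D(3) by (simp add: eq_neg_iff_add_eq_0)
  have "(\<Sum>j\<in>D1. x j) \<noteq> 0"
  proof
    assume "(\<Sum>j\<in>D1. x j) = 0"
    then have "D1 = {}" "D2 = {}"
      using J(3) D12(1) part sum_unit_step_eq_0_iff[OF D12(2)] by (auto simp: zero_sum_free_def)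
    then show False using D(2) D12(3) by simp
  qed
  then show ?thesis
    using part conformal_le_neg_sum_unit_step[OF D12(2)] by (simp add: D1_def)
qed

lemma decomposable_if_proper_zero_subsum:
  fixes x :: "'a \<Rightarrow> int^'d"
  assumes J: "finite J" "x ` J \<subseteq> A" "(\<Sum>j\<in>J. x j) = y" "zero_sum_free x J"
    and D: "D \<subseteq> J <+> unit_steps y" "D \<noteq> {}" "D \<noteq> J <+> unit_steps y"
      "(\<Sum>q\<in>D. case_sum x (unit_step y) q) = 0"
  shows "decomposable A y"
proof -
  define T where "T = J <+> unit_steps y"
  have "finite T" using J(1) finite_unit_steps by (simp add: T_def)
  then have "(\<Sum>q\<in>T - D. case_sum x (unit_step y) q) = 0"
    using D(1,4) sum_Plus_unit_steps_eq_0[OF J(1,3)] by (simp add: T_def sum_diff)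
  moreover have "T - D \<subseteq> J <+> unit_steps y" "T - D \<noteq> {}"
    using D(1,3) by (auto simp: T_def)
  ultimately have rest: "(\<Sum>j | Inl j \<in> T - D. x j) \<noteq> 0 \<and> conformal_le (\<Sum>j | Inl j \<in> T - D. x j) y"
    using conformal_part_of_zero_sum[OF J(1,3,4)] by blast
  define D1 where "D1 = {j. Inl j \<in> D}"
  have D1: "D1 \<subseteq> J" "{j. Inl j \<in> T - D} = J - D1"
    using D(1) by (auto simp: T_def D1_def)
  have "(\<Sum>j\<in>D1. x j) + (\<Sum>j\<in>J - D1. x j) = y"
    using J(1,3) D1(1) by (simp add: sum_diff finite_subset)
  moreover have "(\<Sum>j\<in>D1. x j) \<in> monoid_closure A" "(\<Sum>j\<in>J - D1. x j) \<in> monoid_closure A"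
    using J(1,2) D1(1) by (auto intro!: monoid_closure_sum intro: finite_subset)
  ultimately show ?thesis
    using conformal_part_of_zero_sum[OF J(1,3,4) D(1,2,4)] rest
    unfolding decomposable_def D1(2) D1_def by blast
qed

lemma lattice_box_eq:
  "{v :: int^'d. \<forall>i. \<bar>v $ i\<bar> \<le> m} = vec_lambda ` (PiE UNIV (\<lambda>_. {-m..m}))"
proof (intro equalityI subsetI)
  fix v :: "int^'d" assume "v \<in> {v. \<forall>i. \<bar>v $ i\<bar> \<le> m}"
  then have "vec_nth v \<in> PiE UNIV (\<lambda>_. {-m..m})" by (auto simp: abs_le_iff minus_le_iff)
  then show "v \<in> vec_lambda ` (PiE UNIV (\<lambda>_. {-m..m}))"
    by (metis image_eqI vec_nth_inverse)
qed (auto simp: PiE_iff abs_le_iff minus_le_iff)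

lemma card_lattice_box:
  "card {v :: int^'d. \<forall>i. \<bar>v $ i\<bar> \<le> m} = nat (2 * m + 1) ^ CARD('d)"
proof -
  have "inj_on vec_lambda (PiE (UNIV :: 'd set) (\<lambda>_. {-m..m}))"
    by (auto intro: inj_onI simp: vec_lambda_inject)
  then show ?thesis
    unfolding lattice_box_eq by (simp add: card_image card_PiE)
qed

lemma finite_lattice_box: "finite {v :: int^'d. \<forall>i. \<bar>v $ i\<bar> \<le> m}"
  unfolding lattice_box_eq by (intro finite_imageI finite_PiE) auto

lemma steinitz_chain_int:
  fixes w :: "'i \<Rightarrow> int^'d" and K :: int
  assumes T: "finite T" "(\<Sum>q\<in>T. w q) = 0"
    and K: "\<And>q i. q \<in> T \<Longrightarrow> \<bar>w q $ i\<bar> \<le> K" "0 \<le> K"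
  shows "\<exists>f. mono f \<and> (\<forall>k. f k \<subseteq> T) \<and>
    (\<forall>k\<le>card T. card (f k) = k \<and> (\<forall>i. \<bar>(\<Sum>q\<in>f k. w q) $ i\<bar> \<le> int CARD('d) * K))"
proof -
  define u where "u q = (\<chi> i. real_of_int (w q $ i))" for q
  have u_sum: "(\<Sum>q\<in>S. u q) $ i = real_of_int ((\<Sum>q\<in>S. w q) $ i)" for S i
    by (simp add: u_def)
  have "(\<Sum>q\<in>T. u q) = 0"
    using T(2) by (simp add: vec_eq_iff u_sum del: sum_component)
  moreover have "\<bar>u q $ i\<bar> \<le> real_of_int K" if "q \<in> T" for q i
    using K(1)[OF that, of i] by (simp add: u_def)
  ultimately obtain f where f: "mono f" "\<forall>k. f k \<subseteq> T"
      "\<forall>k\<le>card T. card (f k) = k \<and> (\<forall>i. \<bar>(\<Sum>q\<in>f k. u q) $ i\<bar> \<le> real CARD('d) * real_of_int K)"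
    using steinitz_chain[OF T(1), of u "real_of_int K"] K(2) by auto
  have "\<bar>(\<Sum>q\<in>f k. w q) $ i\<bar> \<le> int CARD('d) * K" if "k \<le> card T" for k i
  proof -
    have "\<bar>(\<Sum>q\<in>f k. u q) $ i\<bar> \<le> real CARD('d) * real_of_int K"
      using f(3) that by blast
    then have "\<bar>real_of_int ((\<Sum>q\<in>f k. w q) $ i)\<bar> \<le> real CARD('d) * real_of_int K"
      by (simp only: u_sum)
    then show ?thesis
      by (metis of_int_abs of_int_le_iff of_int_mult of_int_of_nat_eq)
  qed
  with f show ?thesis by blast
qed

lemma card_le_if_no_proper_zero_subsum:
  fixes w :: "'i \<Rightarrow> int^'d" and K :: int
  assumes T: "finite T" "(\<Sum>q\<in>T. w q) = 0"
    and K: "\<And>q i. q \<in> T \<Longrightarrow> \<bar>w q $ i\<bar> \<le> K" "0 \<le> K"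
    and proper: "\<And>D. D \<subseteq> T \<Longrightarrow> D \<noteq> {} \<Longrightarrow> D \<noteq> T \<Longrightarrow> (\<Sum>q\<in>D. w q) \<noteq> 0"
  shows "int (card T) \<le> (2 * int CARD('d) * K + 1) ^ CARD('d)"
proof -
  obtain f where f: "mono f" "\<forall>k. f k \<subseteq> T"
      "\<forall>k\<le>card T. card (f k) = k \<and> (\<forall>i. \<bar>(\<Sum>q\<in>f k. w q) $ i\<bar> \<le> int CARD('d) * K)"
    using steinitz_chain_int[OF T K] by blast
  define s where "s k = (\<Sum>q\<in>f k. w q)" for k
  define B where "B = {v :: int^'d. \<forall>i. \<bar>v $ i\<bar> \<le> int CARD('d) * K}"
  \<comment> \<open>equal partial sums \<open>s j = s k\<close> would cut out the proper zero-sum subset \<open>f k - f j\<close>\<close>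
  have "inj_on s {..<card T}"
  proof (rule linorder_inj_onI')
    fix j k assume jk: "j \<in> {..<card T}" "k \<in> {..<card T}" "j < k"
    have sub: "f j \<subseteq> f k" "f k \<subseteq> T"
      using monoD[OF f(1), of j k] jk(3) f(2) by auto
    then have fin: "finite (f k)" using T(1) finite_subset by blast
    have card: "card (f j) = j" "card (f k) = k"
      using f(3) jk by auto
    have "f k - f j \<subseteq> T" "f k - f j \<noteq> {}"
      using sub fin card jk(3) by auto
    moreover have "f k - f j \<noteq> T"
    proof
      assume "f k - f j = T"
      then have "card T \<le> card (f k)"
        using fin by (metis Diff_subset card_mono)
      then show False using card(2) jk(2) by simp
    qed
    ultimately have "(\<Sum>q\<in>f k - f j. w q) \<noteq> 0"
      by (rule proper)
    moreover have "(\<Sum>q\<in>f k - f j. w q) = s k - s j"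
      using sub fin by (simp add: s_def sum_diff)
    ultimately show "s j \<noteq> s k"
      by simp
  qed
  moreover have "s ` {..<card T} \<subseteq> B"
    using f(3) by (auto simp: B_def s_def)
  ultimately have "card {..<card T} \<le> card B"
    using finite_lattice_box unfolding B_def by (intro card_inj_on_le) auto
  then have "card T \<le> nat (2 * (int CARD('d) * K) + 1) ^ CARD('d)"
    by (simp add: B_def card_lattice_box)
  then have "int (card T) \<le> int (nat (2 * (int CARD('d) * K) + 1)) ^ CARD('d)"
    by (metis of_nat_le_iff of_nat_power)
  then show ?thesis
    using K(2) by (simp add: mult.assoc)
qed

lemma indecomposable_abs_le:
  fixes A :: "(int^'d) set" and K :: int
  assumes A: "\<And>v i. v \<in> A \<Longrightarrow> \<bar>v $ i\<bar> \<le> K" "1 \<le> K"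
    and y: "y \<in> monoid_closure A" "\<not> decomposable A y"
  shows "\<bar>y $ i\<bar> \<le> (2 * int CARD('d) * K + 1) ^ CARD('d)"
proof -
  obtain J :: "nat set" and x where J: "finite J" "x ` J \<subseteq> A" "(\<Sum>j\<in>J. x j) = y" "zero_sum_free x J"
    using monoid_closure_obtain_zero_sum_free[OF y(1)] .
  define T where "T = J <+> unit_steps y"
  define w where "w = case_sum x (unit_step y)"
  have T: "finite T" using J(1) finite_unit_steps by (simp add: T_def)
  have "\<bar>w q $ i\<bar> \<le> K" if "q \<in> T" for q i
    using that A J(2) by (auto simp: T_def w_def unit_step_def axis_def abs_sgn_eq)
  moreover have "(\<Sum>q\<in>D. w q) \<noteq> 0" if "D \<subseteq> T" "D \<noteq> {}" "D \<noteq> T" for D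
    using decomposable_if_proper_zero_subsum[OF J] that y(2) by (auto simp: T_def w_def)
  ultimately have "int (card T) \<le> (2 * int CARD('d) * K + 1) ^ CARD('d)"
    using A(2) sum_Plus_unit_steps_eq_0[OF J(1,3)]
    by (intro card_le_if_no_proper_zero_subsum[OF T]) (auto simp: T_def w_def)
  moreover have "card (unit_steps y) \<le> card T"
    using J(1) by (simp add: T_def card_Plus finite_unit_steps)
  ultimately show ?thesis
    using abs_le_card_unit_steps[of y i] by linarith
qed

section \<open>Minimal elements\<close>

lemma exists_small_conformal_cover:
  fixes A :: "(int^'d) set" and C :: int
  assumes atoms: "\<And>v i. v \<in> monoid_closure A \<Longrightarrow> \<not> decomposable A v \<Longrightarrow> \<bar>v $ i\<bar> \<le> C"
    and "0 \<le> C" "y \<in> monoid_closure A" "I \<subseteq> {i. y $ i \<noteq> 0}"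
  shows "\<exists>z\<in>monoid_closure A. conformal_le z y \<and> I \<subseteq> {i. z $ i \<noteq> 0} \<and> (\<forall>i. \<bar>z $ i\<bar> \<le> int (card I) * C)"
  using assms(3,4)
proof (induction "nat (\<Sum>i\<in>UNIV. \<bar>y $ i\<bar>)" arbitrary: y I rule: less_induct)
  case less
  show ?case
  proof (cases "decomposable A y")
    case True
    then obtain z w where zw: "z \<in> monoid_closure A" "w \<in> monoid_closure A" "z \<noteq> 0" "w \<noteq> 0"
      "z + w = y" "conformal_le z y" "conformal_le w y"
      unfolding decomposable_def by blast
    define I1 where "I1 = I \<inter> {i. z $ i \<noteq> 0}"
    define I2 where "I2 = I - I1"
    have "I2 \<subseteq> {i. w $ i \<noteq> 0}"
      using less.prems(2) zw(5) by (auto simp: I1_def I2_def)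
    moreover have "w + z = y"
      using zw(5) by (simp add: add.commute)
    ultimately obtain w' where w': "w' \<in> monoid_closure A" "conformal_le w' w"
        "I2 \<subseteq> {i. w' $ i \<noteq> 0}" "\<forall>i. \<bar>w' $ i\<bar> \<le> int (card I2) * C"
      using less.hyps[OF sum_abs_less_if_conformal_split[OF _ zw(7,6,3)] zw(2)] by blast
    obtain z' where z': "z' \<in> monoid_closure A" "conformal_le z' z" "I1 \<subseteq> {i. z' $ i \<noteq> 0}"
        "\<forall>i. \<bar>z' $ i\<bar> \<le> int (card I1) * C"
      using less.hyps[OF sum_abs_less_if_conformal_split[OF zw(5-7,4)] zw(1), of I1]
      by (auto simp: I1_def)
    have abs_sum: "\<bar>(z' + w') $ i\<bar> = \<bar>z' $ i\<bar> + \<bar>w' $ i\<bar>" for i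
      using abs_add_conformal_le conformal_le_trans z'(2) w'(2) zw(6,7) by blast
    have "I \<subseteq> {i. (z' + w') $ i \<noteq> 0}"
    proof
      fix i assume "i \<in> I"
      then have "z' $ i \<noteq> 0 \<or> w' $ i \<noteq> 0"
        using z'(3) w'(3) by (auto simp: I1_def I2_def)
      then show "i \<in> {i. (z' + w') $ i \<noteq> 0}"
        using abs_sum[of i] by (auto simp del: vector_add_component)
    qed
    moreover have "card I = card I1 + card I2"
      using card_mono[of I I1] by (simp add: I1_def I2_def card_Diff_subset_Int)
    then have "\<bar>(z' + w') $ i\<bar> \<le> int (card I) * C" for i
      using z'(4) w'(4) abs_sum[of i] add_mono by (fastforce simp: distrib_right)
    ultimately show ?thesis
      using monoid_closure_add[OF z'(1) w'(1)] conformal_le_add[OF zw(5-7) z'(2) w'(2)] by blast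
  next
    case False
    show ?thesis
    proof (cases "I = {}")
      case True
      then show ?thesis
        using conformal_le_zero monoid_closure.zero by fastforce
    next
      case False
      then have "C \<le> int (card I) * C"
        using \<open>0 \<le> C\<close> by (simp add: card_gt_0_iff Suc_le_eq mult_le_cancel_right1)
      then show ?thesis
        using atoms[OF less.prems(1) \<open>\<not> decomposable A y\<close>] less.prems conformal_le_refl
        by (meson order_trans)
    qed
  qed
qed

lemma abs_le_if_min_sign:
  fixes A :: "(int^'d) set" and C :: int
  assumes atoms: "\<And>v i. v \<in> monoid_closure A \<Longrightarrow> \<not> decomposable A v \<Longrightarrow> \<bar>v $ i\<bar> \<le> C"
    and "0 \<le> C" "y \<in> min_sign (monoid_closure A)"
  shows "\<bar>y $ i\<bar> \<le> int CARD('d) * C"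
proof -
  obtain z where z: "z \<in> monoid_closure A" "conformal_le z y" "{i. y $ i \<noteq> 0} \<subseteq> {i. z $ i \<noteq> 0}"
      "\<forall>i. \<bar>z $ i\<bar> \<le> int (card {i. y $ i \<noteq> 0}) * C"
    using assms(3) exists_small_conformal_cover[where A = A and y = y and I = "{i. y $ i \<noteq> 0}",
        OF atoms \<open>0 \<le> C\<close>]
    by (auto simp: min_sign_def)
  then have "sign_le z y"
    by (auto simp: sign_le_iff_conformal_le)
  then have "z = y"
    using z(1) assms(3) by (auto simp: min_sign_def)
  moreover have "int (card {i. y $ i \<noteq> 0}) * C \<le> int CARD('d) * C"
    using \<open>0 \<le> C\<close> by (intro mult_right_mono) (auto intro: card_mono)
  ultimately show ?thesis
    using z(4) by (metis order_trans)
qed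

lemma maxnorm_eq_Max: "maxnorm x = Max (range (\<lambda>i. \<bar>x $ i\<bar>))"
  unfolding maxnorm_def by (rule arg_cong[where f = Max]) auto

lemma abs_le_maxnorm: "\<bar>x $ i\<bar> \<le> maxnorm x"
  unfolding maxnorm_eq_Max by (rule Max_ge) auto

lemma set_maxnorm_le:
  assumes "\<And>y i. y \<in> Y \<Longrightarrow> \<bar>y $ i\<bar> \<le> b" "0 \<le> b"
  shows "set_maxnorm Y \<le> b"
proof -
  have maxnorm_le: "maxnorm y \<le> b" if "y \<in> Y" for y
    unfolding maxnorm_eq_Max using assms(1)[OF that] by (intro Max.boundedI) auto
  have "maxnorm ` Y \<subseteq> {0..b}"
    using maxnorm_le order_trans[OF abs_ge_zero abs_le_maxnorm] by auto
  then have "finite (maxnorm ` Y)"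
    by (rule finite_subset) simp
  then show ?thesis
    using maxnorm_le assms(2) by (auto simp: set_maxnorm_def intro: Max.boundedI)
qed

lemma abs_le_set_maxnorm: "finite A \<Longrightarrow> v \<in> A \<Longrightarrow> \<bar>v $ i\<bar> \<le> set_maxnorm A"
  unfolding set_maxnorm_def by (auto intro!: order_trans[OF abs_le_maxnorm] Max_ge)

lemma set_maxnorm_nonneg:
  assumes "finite A"
  shows "0 \<le> set_maxnorm A"
proof (cases "A = {}")
  case False
  then obtain v where "v \<in> A" by blast
  then show ?thesis
    using abs_le_set_maxnorm[OF assms] abs_ge_zero order_trans by metis
qed (simp add: set_maxnorm_def)

lemma bernoulli_power_bound:
  fixes a :: int
  assumes "1 \<le> a"
  shows "(2 * int d * a + 1) ^ d \<le> (2 + (1 + 2 * a) ^ d * a) ^ d"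
proof (rule power_mono)
  have "1 + real d * real_of_int (2 * a) \<le> (1 + real_of_int (2 * a)) ^ d"
    using assms by (intro Bernoulli_inequality) simp
  then have "real_of_int (1 + 2 * a * int d) \<le> real_of_int ((1 + 2 * a) ^ d)"
    by (simp add: algebra_simps)
  then have "1 + 2 * a * int d \<le> (1 + 2 * a) ^ d"
    by (simp only: of_int_le_iff)
  then have bernoulli: "(1 + 2 * a * int d) * a \<le> (1 + 2 * a) ^ d * a"
    using assms by (intro mult_right_mono) auto
  have "2 * int d * a \<le> 2 * int d * a * a"
    using mult_left_mono[of 1 a "2 * int d * a"] assms by simp
  moreover have "(1 + 2 * a * int d) * a = a + 2 * int d * a * a"
    by (simp add: algebra_simps)
  ultimately have "2 * int d * a + 1 \<le> (1 + 2 * a * int d) * a + 2"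
    using assms by linarith
  then show "2 * int d * a + 1 \<le> 2 + (1 + 2 * a) ^ d * a"
    using bernoulli by simp
qed (use assms in simp)

theorem lemma10:
  fixes A :: "(int ^ 'd) set"
  assumes "finite A"
  shows "set_maxnorm (min_sign (monoid_closure A))
    \<le> int CARD('d) * (2 + (1 + 2 * set_maxnorm A) ^ CARD('d) * set_maxnorm A) ^ CARD('d)"
proof -
  define a where "a = set_maxnorm A"
  have a: "0 \<le> a" "\<And>v i. v \<in> A \<Longrightarrow> \<bar>v $ i\<bar> \<le> a"
    using assms by (simp_all add: a_def set_maxnorm_nonneg abs_le_set_maxnorm)
  have "\<bar>y $ i\<bar> \<le> int CARD('d) * (2 + (1 + 2 * a) ^ CARD('d) * a) ^ CARD('d)"
    if y: "y \<in> min_sign (monoid_closure A)" for y i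
  proof (cases "a = 0")
    case True
    then have "A \<subseteq> {0}"
      using a(2) by (auto simp: vec_eq_iff)
    then have "y = 0"
      using y monoid_closure_trivial by (auto simp: min_sign_def)
    then show ?thesis using True by simp
  next
    case False
    then have "1 \<le> a" using a(1) by simp
    have "\<bar>y $ i\<bar> \<le> int CARD('d) * (2 * int CARD('d) * a + 1) ^ CARD('d)"
      using abs_le_if_min_sign[OF indecomposable_abs_le[OF a(2) \<open>1 \<le> a\<close>] _ y] a(1) by simp
    also have "\<dots> \<le> int CARD('d) * (2 + (1 + 2 * a) ^ CARD('d) * a) ^ CARD('d)"
      using bernoulli_power_bound[OF \<open>1 \<le> a\<close>] by (intro mult_left_mono) auto
    finally show ?thesis .
  qed
  then show ?thesis
    using a(1) unfolding a_def by (intro set_maxnorm_le) auto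
qed

end
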